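(* Consider the closed-loop system $\Sigma$: $\dot x(t)=f\big(x(t),k(x(t_{k(t)}))\big)$ described in the context, with control updates generated by the ideal sampling logic based on the condition $\gamma_2(4\|e(t)\|)\le\lambda(1-c)V(x(t))$, $c\in(0,1)$. Assume: (A1) $\lim_{n\to\infty}h_n=\infty$ and there exist $\kappa\ge0$, $\tau>0$ such that $|\Xi(t)|\le\kappa+t/\tau$ for all $t\ge0$; (A2) there exists $\mu>0$ such that $\gamma_2(4r)\le\mu\,\alpha_1(r)$ for all $r\ge0$. Let $\omega_1=c\lambda$ and $\omega_2=\lambda(1-c)+2\mu$. If $$\tau>\frac{\omega_1}{\omega_1+\omega_2}=\frac{c\lambda}{\lambda+2\mu},$$ then any solution of $\Sigma$ satisfies, for all $t\ge0$, $$\|x(t)\|\le\alpha_1^{-1}\Big(e^{\kappa(\omega_1+\omega_2)}\,e^{-[\omega_1-(\omega_1+\omega_2)/\tau]\,t}\,\alpha_2(\|x(0)\|)\Big).$$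
   Context: Plant: $\dot x=f(x,u)$, $x\in\mathbb R^{n_x}$. There is a smooth feedback $u=k(x)$, a smooth function $V$, class $\mathcal K_\infty$ functions $\alpha_1,\alpha_2,\gamma_2$ and $\lambda>0$ such that for all $x,e$: $\alpha_1(\|x\|)\le V(x)\le\alpha_2(\|x\|)$ and $\nabla V(x)f(x,k(x+e))\le-\lambda V(x)+\gamma_2(\|e\|)$. Norms are Euclidean. DoS: a sequence $\{h_n\}_{n\in\mathbb N}$, $h_0\ge0$, and durations $\tau_n>0$ define DoS intervals $H_n=[h_n,h_n+\tau_n[$ during which no information is transmitted from sensor to actuator. $\Theta(t):=[0,t]\setminus\bigcup_n H_n$ and $\Xi(t):=\bigcup_n H_n\cap[0,t]$, with $|\Xi(t)|$ its total length. Given control update times $\{t_k\}_{k\in\mathbb N}$ with $t_0=0$, let $k(t):=-1$ if $\Theta(t)=\emptyset$ and otherwise $k(t):=\sup\{k\in\mathbb N: t_k\in\Theta(t)\}$; with the convention $x(t_{-1}):=0$. The applied input is $u(t)=k(x(t_{k(t)}))$, and $e(t):=x(t_{k(t)})-x(t)$. Ideal sampling logic: given $t_k$, (i) if $t_k$ does not belong to any DoS interval, $t_{k+1}$ is the infimal time larger than $t_k$ at which $\gamma_2(4\|e(t)\|)\le\lambda(1-c)V(x(t))$ is violated; (ii) if $t_k\in H_n$, then $t_{k+1}:=h_n+\tau_n$. *)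

theory Defs
  imports "HOL-Analysis.Analysis"
begin

definition classK_inf :: "(real \<Rightarrow> real) \<Rightarrow> bool" where
  "classK_inf \<alpha> \<longleftrightarrow> \<alpha> 0 = 0 \<and> continuous_on {0..} \<alpha> \<and> strict_mono_on {0..} \<alpha>
      \<and> filterlim \<alpha> at_top at_top"

definition DoS_int :: "(nat \<Rightarrow> real) \<Rightarrow> (nat \<Rightarrow> real) \<Rightarrow> nat \<Rightarrow> real set" where
  "DoS_int h dur n = {h n ..< h n + dur n}"

definition Theta :: "(nat \<Rightarrow> real) \<Rightarrow> (nat \<Rightarrow> real) \<Rightarrow> real \<Rightarrow> real set" where
  "Theta h dur t = {0..t} - (\<Union>n. DoS_int h dur n)"

definition Xi :: "(nat \<Rightarrow> real) \<Rightarrow> (nat \<Rightarrow> real) \<Rightarrow> real \<Rightarrow> real set" where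
  "Xi h dur t = (\<Union>n. DoS_int h dur n) \<inter> {0..t}"

text \<open>Update times are extended reals; the value \<infinity> means "no further update"
  (the infimum of an empty set of violation times).
  kset = {k. t_k \<in> Theta(t)}; k(t) = Max kset, or -1 if kset is empty.\<close>
definition kset :: "(nat \<Rightarrow> real) \<Rightarrow> (nat \<Rightarrow> real) \<Rightarrow> (nat \<Rightarrow> ereal) \<Rightarrow> real \<Rightarrow> nat set" where
  "kset h dur tk t = {k. \<exists>r. tk k = ereal r \<and> r \<in> Theta h dur t}"

definition kidx :: "(nat \<Rightarrow> real) \<Rightarrow> (nat \<Rightarrow> real) \<Rightarrow> (nat \<Rightarrow> ereal) \<Rightarrow> real \<Rightarrow> int" where
  "kidx h dur tk t = (if kset h dur tk t = {} then -1 else int (Max (kset h dur tk t)))"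

text \<open>x(t_{k(t)}), with the convention x(t_{-1}) = 0.\<close>
definition held :: "(real \<Rightarrow> 'a::real_vector) \<Rightarrow> (nat \<Rightarrow> real) \<Rightarrow> (nat \<Rightarrow> real) \<Rightarrow> (nat \<Rightarrow> ereal) \<Rightarrow> real \<Rightarrow> 'a" where
  "held x h dur tk t = (if kidx h dur tk t = -1 then 0
       else x (real_of_ereal (tk (nat (kidx h dur tk t)))))"

definition is_solution ::
  "('a::euclidean_space \<Rightarrow> 'b \<Rightarrow> 'a) \<Rightarrow> ('a \<Rightarrow> 'b) \<Rightarrow> ('a \<Rightarrow> real) \<Rightarrow> (real \<Rightarrow> real)
   \<Rightarrow> real \<Rightarrow> real \<Rightarrow> (nat \<Rightarrow> real) \<Rightarrow> (nat \<Rightarrow> real) \<Rightarrow> (nat \<Rightarrow> ereal) \<Rightarrow> (real \<Rightarrow> 'a) \<Rightarrow> bool"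
where
  "is_solution f kfb V \<gamma>2 lam c h dur tk x \<longleftrightarrow>
     continuous_on {0..} x
   \<and> tk 0 = 0
   \<and> (\<forall>t. finite {k. tk k \<le> ereal t})
   \<and> (\<forall>k. tk k = \<infinity> \<longrightarrow> tk (Suc k) = \<infinity>)
   \<and> (\<forall>k r. tk k = ereal r \<longrightarrow> (\<forall>n. r \<notin> DoS_int h dur n) \<longrightarrow>
        tk (Suc k) = Inf (ereal ` {s. s > r \<and>
            \<not> (\<gamma>2 (4 * norm (x r - x s)) \<le> lam * (1 - c) * V (x s))}))
   \<and> (\<forall>k r n. tk k = ereal r \<longrightarrow> r \<in> DoS_int h dur n \<longrightarrow>
        tk (Suc k) = ereal (h n + dur n))
   \<and> (\<forall>t>0. (\<forall>k. tk k \<noteq> ereal t) \<longrightarrow>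
        (x has_vector_derivative f (x t) (kfb (held x h dur tk t))) (at t))"

end

theory Submission
  imports Defs
begin

text \<open>Compare \<open>V(x(t))\<close> with the envelope \<open>exp(-\<omega>\<^sub>1 t + (\<omega>\<^sub>1 + \<omega>\<^sub>2) |\<Xi>(t)|)\<close>,
  which decays at rate \<open>\<omega>\<^sub>1\<close> and grows at rate \<open>\<omega>\<^sub>2\<close> while a DoS interval is running.
  After a successful transmission the sampling rule keeps \<open>\<gamma>\<^sub>2(|e|) \<le> \<lambda>(1-c)V\<close>, so \<open>V\<close>
  decays at rate \<open>c\<lambda> = \<omega>\<^sub>1\<close>. During an attack the held sample \<open>y\<close> is frozen; by
  \<open>\<gamma>\<^sub>2(|y - x|) \<le> \<gamma>\<^sub>2(2|y|) + \<gamma>\<^sub>2(2|x|)\<close> and (A2), \<open>V\<close> grows at most at rate \<open>\<omega>\<^sub>2\<close> above the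
  level \<open>P\<close> provided \<open>\<gamma>\<^sub>2(2|y|) \<le> (\<omega>\<^sub>2 - \<mu>)P\<close>, and the sampling rule (closed up at
  the start of the attack) yields exactly this for \<open>P\<close> the envelope times \<open>V(x(0))\<close>.
  Induction over the update times gives \<open>V(x(t)) \<le> envelope(t) V(x(0))\<close>, and (A1) bounds the envelope.\<close>

lemma nonpos_if_derivative_nonpos_where_pos:
  fixes F F' :: "real \<Rightarrow> real"
  assumes "a \<le> b" and cont: "continuous_on {a..b} F"
    and der: "\<And>s. a < s \<Longrightarrow> s < b \<Longrightarrow> (F has_real_derivative F' s) (at s)"
    and "F a \<le> 0"
    and F'_nonpos: "\<And>s. a < s \<Longrightarrow> s < b \<Longrightarrow> F s > 0 \<Longrightarrow> F' s \<le> 0"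
  shows "F b \<le> 0"
proof (rule ccontr)
  assume Fb: "\<not> F b \<le> 0"
  define S where "S = {a..b} \<inter> F -` {..0}"
  have "S \<noteq> {}" using assms by (auto simp: S_def)
  moreover have bdd: "bdd_above S" unfolding S_def by (auto intro: bdd_aboveI[of _ b])
  moreover have "closed S" unfolding S_def by (rule continuous_closed_preimage[OF cont]) auto
  ultimately have "Sup S \<in> S" by (rule closed_contains_Sup)
  hence s0: "a \<le> Sup S" "Sup S \<le> b" "F (Sup S) \<le> 0" by (auto simp: S_def)
  hence s0_less: "Sup S < b" using Fb by (cases "Sup S = b") auto
  have pos: "F s > 0" if "Sup S < s" "s \<le> b" for s
  proof (rule ccontr)
    assume "\<not> F s > 0"
    hence "s \<in> S" using that s0 by (auto simp: S_def)
    hence "s \<le> Sup S" using bdd by (rule cSup_upper)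
    thus False using that by simp
  qed
  have "\<exists>l z. Sup S < z \<and> z < b \<and> DERIV F z :> l \<and> F b - F (Sup S) = (b - Sup S) * l"
  proof (rule MVT[OF s0_less])
    show "continuous_on {Sup S..b} F" using cont s0 by (auto intro: continuous_on_subset)
    show "\<And>z. Sup S < z \<Longrightarrow> z < b \<Longrightarrow> F differentiable at z"
      using der s0 real_differentiable_def by force
  qed
  then obtain l z where z: "Sup S < z" "z < b" "DERIV F z :> l" "F b - F (Sup S) = (b - Sup S) * l"
    by blast
  have "l = F' z" using DERIV_unique[OF z(3) der] z s0 by simp
  hence "l \<le> 0" using F'_nonpos[of z] pos[of z] z s0 by simp
  hence "(b - Sup S) * l \<le> 0" using s0_less by (simp add: mult_nonneg_nonpos)
  thus False using z(4) s0 Fb by simp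
qed

lemma le_exp_bound_by_comparison:
  fixes \<phi> \<phi>' :: "real \<Rightarrow> real"
  assumes "r \<le> t" and cont: "continuous_on {r..t} \<phi>"
    and der: "\<And>s. r < s \<Longrightarrow> s < t \<Longrightarrow> (\<phi> has_real_derivative \<phi>' s) (at s)"
    and "\<phi> r \<le> P"
    and slope: "\<And>s. r < s \<Longrightarrow> s < t \<Longrightarrow> \<phi> s > P * exp (a * (s - r)) \<Longrightarrow> \<phi>' s \<le> a * \<phi> s"
  shows "\<phi> t \<le> P * exp (a * (t - r))"
proof -
  define F where "F s = \<phi> s * exp (- a * (s - r)) - P" for s
  define F' where "F' s = (\<phi>' s - a * \<phi> s) * exp (- a * (s - r))" for s
  have exp_inv: "exp (- a * (s - r)) * exp (a * (s - r)) = 1" for s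
    by (simp add: exp_add[symmetric])
  have above: "\<phi> s > P * exp (a * (s - r))" if "F s > 0" for s
  proof -
    have "P * exp (a * (s - r)) < \<phi> s * exp (- a * (s - r)) * exp (a * (s - r))"
      using that by (intro mult_strict_right_mono) (simp_all add: F_def)
    thus ?thesis unfolding mult.assoc exp_inv by simp
  qed
  have "F t \<le> 0"
  proof (rule nonpos_if_derivative_nonpos_where_pos[of r t F F'])
    show "continuous_on {r..t} F" unfolding F_def by (intro continuous_intros cont)
    show "(F has_real_derivative F' s) (at s)" if "r < s" "s < t" for s
      unfolding F_def F'_def by (auto intro!: derivative_eq_intros der that simp: algebra_simps)
    show "F' s \<le> 0" if "r < s" "s < t" "F s > 0" for s
      using slope[OF that(1,2) above[OF that(3)]] by (simp add: F'_def mult_nonpos_nonneg)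
  qed (use assms in \<open>simp_all add: F_def\<close>)
  hence "\<phi> t * exp (- a * (t - r)) * exp (a * (t - r)) \<le> P * exp (a * (t - r))"
    by (simp add: F_def)
  thus ?thesis unfolding mult.assoc exp_inv by simp
qed

lemma has_real_derivative_compose_curve:
  assumes "(V has_derivative DV) (at (x t))" and "(x has_vector_derivative v) (at t)"
  shows "((\<lambda>s. V (x s)) has_real_derivative DV v) (at t)"
proof -
  have "(x has_derivative (\<lambda>h. h *\<^sub>R v)) (at t)"
    using assms(2) by (simp add: has_vector_derivative_def)
  hence "((V \<circ> x) has_derivative DV \<circ> (\<lambda>h. h *\<^sub>R v)) (at t)"
    using assms(1) by (rule diff_chain_at)
  moreover have "DV \<circ> (\<lambda>h. h *\<^sub>R v) = (*) (DV v)"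
    using linear.scaleR[OF bounded_linear.linear[OF has_derivative_bounded_linear[OF assms(1)]]]
    by (auto simp: fun_eq_iff)
  ultimately show ?thesis by (simp add: has_field_derivative_def o_def)
qed

lemma classK_inf_mono:
  assumes "classK_inf g" "0 \<le> p" "p \<le> q"
  shows "g p \<le> g q"
  by (rule strict_mono_on_leD) (use assms in \<open>auto simp: classK_inf_def\<close>)

lemma classK_inf_nonneg:
  assumes "classK_inf g" "0 \<le> p"
  shows "0 \<le> g p"
proof -
  have "g 0 \<le> g p" by (rule classK_inf_mono[OF assms(1)]) (use assms in auto)
  thus ?thesis using assms(1) by (simp add: classK_inf_def)
qed

lemma classK_inf_le_add:
  assumes "classK_inf g" "0 \<le> p" "0 \<le> q" "0 \<le> u" "u \<le> p + q"
  shows "g u \<le> g (2 * p) + g (2 * q)"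
proof (cases "p \<le> q")
  case True
  have "g u \<le> g (2 * q)" by (rule classK_inf_mono[OF assms(1)]) (use assms True in auto)
  thus ?thesis using classK_inf_nonneg[of g "2 * p"] assms by simp
next
  case False
  have "g u \<le> g (2 * p)" by (rule classK_inf_mono[OF assms(1)]) (use assms False in auto)
  thus ?thesis using classK_inf_nonneg[of g "2 * q"] assms by simp
qed

lemma le_inv_into_classK_inf:
  assumes K: "classK_inf \<alpha>" and "0 \<le> \<beta>" "0 \<le> z" "\<alpha> z \<le> \<beta>"
  shows "z \<le> inv_into {0..} \<alpha> \<beta>"
proof -
  have sm: "strict_mono_on {0..} \<alpha>" and "\<alpha> 0 = 0" and cont: "continuous_on {0..} \<alpha>"
    and "filterlim \<alpha> at_top at_top" using K by (auto simp: classK_inf_def)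
  then obtain N where N: "\<And>s. s \<ge> N \<Longrightarrow> \<beta> \<le> \<alpha> s"
    by (auto simp: filterlim_at_top eventually_at_top_linorder)
  have "\<exists>y\<ge>0. y \<le> max N 0 \<and> \<alpha> y = \<beta>"
    by (rule IVT') (use \<open>\<alpha> 0 = 0\<close> assms N[of "max N 0"] continuous_on_subset[OF cont] in auto)
  then obtain y where y: "0 \<le> y" "\<alpha> y = \<beta>" by blast
  have "inv_into {0..} \<alpha> \<beta> = y"
    by (rule inv_into_f_eq[OF strict_mono_on_imp_inj_on[OF sm]]) (use y in auto)
  moreover have "z \<le> y"
    using strict_mono_onD[OF sm, of y z] y assms by (cases "y < z") auto
  ultimately show ?thesis by simp
qed

lemma sets_DoS_union: "(\<Union>n. DoS_int h dur n) \<in> sets lborel"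
  by (intro sets.countable_UN) (auto simp: DoS_int_def)

lemma Xi_fmeasurable: "Xi h dur t \<in> fmeasurable lborel"
proof -
  have "Xi h dur t \<in> sets lborel" unfolding Xi_def by (intro sets.Int sets_DoS_union) simp
  moreover have "Xi h dur t \<subseteq> cbox 0 t" unfolding Xi_def cbox_interval by blast
  ultimately show ?thesis by (metis fmeasurableI2 fmeasurable_cbox)
qed

lemma measure_Xi_mono: "s \<le> t \<Longrightarrow> measure lborel (Xi h dur s) \<le> measure lborel (Xi h dur t)"
  by (rule measure_mono_fmeasurable[OF _ Xi_fmeasurable[THEN fmeasurableD] Xi_fmeasurable])
    (auto simp: Xi_def)

lemma measure_Xi_add_attacked:
  assumes "0 \<le> s" "s \<le> t" "{s<..<t} \<subseteq> (\<Union>n. DoS_int h dur n)"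
  shows "measure lborel (Xi h dur s) + (t - s) \<le> measure lborel (Xi h dur t)"
proof -
  have "measure lborel (Xi h dur s \<union> {s<..<t}) = measure lborel (Xi h dur s) + measure lborel {s<..<t}"
    by (rule measure_Union)
      (use Xi_fmeasurable[of h dur s] assms(2) in \<open>auto simp: fmeasurable_def Xi_def\<close>)
  moreover have "measure lborel (Xi h dur s \<union> {s<..<t}) \<le> measure lborel (Xi h dur t)"
    by (rule measure_mono_fmeasurable[OF _ _ Xi_fmeasurable])
      (use assms Xi_fmeasurable[of h dur s] in \<open>auto simp: Xi_def fmeasurable_def\<close>)
  ultimately show ?thesis using assms by simp
qed

lemma measure_Xi_0: "measure lborel (Xi h dur 0) = 0"
proof -
  have "measure lborel (Xi h dur 0) \<le> measure lborel (cbox 0 (0::real))"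
    by (rule measure_mono_fmeasurable[OF _ Xi_fmeasurable[THEN fmeasurableD] fmeasurable_cbox])
      (auto simp: Xi_def cbox_interval)
  thus ?thesis by (simp add: measure_nonneg antisym cbox_interval)
qed

locale dos_event_triggered_loop =
  fixes f :: "'a::euclidean_space \<Rightarrow> 'b \<Rightarrow> 'a" and kfb :: "'a \<Rightarrow> 'b"
    and V :: "'a \<Rightarrow> real" and DV :: "'a \<Rightarrow> 'a \<Rightarrow> real" and \<gamma>2 :: "real \<Rightarrow> real"
    and lam c \<mu> :: real and h dur :: "nat \<Rightarrow> real" and tk :: "nat \<Rightarrow> ereal"
    and x :: "real \<Rightarrow> 'a"
  assumes gamma_classK: "classK_inf \<gamma>2"
    and lam_pos: "lam > 0" and c_pos: "0 < c" and c_less_1: "c < 1" and mu_pos: "\<mu> > 0"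
    and V_has_derivative: "\<And>z. (V has_derivative DV z) (at z)"
    and ISS: "\<And>z e. DV z (f z (kfb (z + e))) \<le> - lam * V z + \<gamma>2 (norm e)"
    and gain_le_V: "\<And>z. \<gamma>2 (4 * norm z) \<le> \<mu> * V z"
    and solution: "is_solution f kfb V \<gamma>2 lam c h dur tk x"
begin

abbreviation \<omega>1 :: real where "\<omega>1 \<equiv> c * lam"

abbreviation \<omega>2 :: real where "\<omega>2 \<equiv> lam * (1 - c) + 2 * \<mu>"

definition attacked :: "real set" where
  "attacked = (\<Union>n. DoS_int h dur n)"

definition transmitted_upto :: "nat \<Rightarrow> nat set" where
  "transmitted_upto k = {j. j \<le> k \<and> (\<exists>r. tk j = ereal r \<and> r \<notin> attacked)}"

text \<open>The value held on \<open>[t\<^sub>k, t\<^sub>k\<^sub>+\<^sub>1)\<close>; it is \<open>0\<close> before the first successful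
  transmission, matching the convention \<open>x(t\<^sub>-\<^sub>1) = 0\<close>.\<close>
definition last_sample :: "nat \<Rightarrow> 'a" where
  "last_sample k = (if transmitted_upto k = {} then 0
     else x (real_of_ereal (tk (Max (transmitted_upto k)))))"

definition envelope :: "real \<Rightarrow> real" where
  "envelope t = exp (- \<omega>1 * t + (\<omega>1 + \<omega>2) * measure lborel (Xi h dur t))"

definition sample_invariant :: "nat \<Rightarrow> real \<Rightarrow> bool" where
  "sample_invariant k r \<longleftrightarrow> V (x r) \<le> envelope r * V (x 0)
     \<and> (r \<in> attacked \<longrightarrow> \<gamma>2 (2 * norm (last_sample k)) \<le> (\<omega>2 - \<mu>) * envelope r * V (x 0))"

lemma x_continuous: "continuous_on {0..} x"
  and update_0: "tk 0 = 0"
  and finite_updates_before: "finite {k. tk k \<le> ereal t}"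
  and update_after_infinity: "tk k = \<infinity> \<Longrightarrow> tk (Suc k) = \<infinity>"
  and update_after_transmission: "tk k = ereal r \<Longrightarrow> r \<notin> attacked \<Longrightarrow>
        tk (Suc k) = Inf (ereal ` {s. s > r \<and>
            \<not> \<gamma>2 (4 * norm (x r - x s)) \<le> lam * (1 - c) * V (x s)})"
  and update_after_attack: "tk k = ereal r \<Longrightarrow> r \<in> DoS_int h dur n \<Longrightarrow>
        tk (Suc k) = ereal (h n + dur n)"
  and x_has_vector_derivative: "t > 0 \<Longrightarrow> (\<forall>k. tk k \<noteq> ereal t) \<Longrightarrow>
        (x has_vector_derivative f (x t) (kfb (held x h dur tk t))) (at t)"
  using solution by (auto simp: is_solution_def attacked_def)

lemma gamma_mono: "0 \<le> p \<Longrightarrow> p \<le> q \<Longrightarrow> \<gamma>2 p \<le> \<gamma>2 q"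
  using gamma_classK by (rule classK_inf_mono)

lemma V_nonneg: "0 \<le> V z"
proof -
  have "0 \<le> \<mu> * V z"
    using gain_le_V[of z] classK_inf_nonneg[OF gamma_classK, of "4 * norm z"] by simp
  thus ?thesis using mu_pos by (simp add: zero_le_mult_iff)
qed

lemma gamma_double_le_V: "\<gamma>2 (2 * norm z) \<le> \<mu> * V z"
  using gamma_mono[of "2 * norm z" "4 * norm z"] gain_le_V[of z] by simp

lemma dissipation: "DV z (f z (kfb y)) \<le> - lam * V z + \<gamma>2 (norm (y - z))"
  using ISS[of z "y - z"] by simp

lemma V_comp_x_continuous:
  assumes "0 \<le> p"
  shows "continuous_on {p..q} (\<lambda>s. V (x s))"
proof -
  have "continuous_on UNIV V"
    using V_has_derivative has_derivative_continuous continuous_at_imp_continuous_on by blast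
  thus ?thesis
    by (rule continuous_on_compose2[OF _ continuous_on_subset[OF x_continuous]]) (use assms in auto)
qed

lemma update_le_Suc: "0 \<le> tk k \<Longrightarrow> tk k \<le> tk (Suc k)"
proof (cases "tk k")
  case (real r)
  show ?thesis
  proof (cases "r \<in> attacked")
    case True
    then obtain n where "r \<in> DoS_int h dur n" by (auto simp: attacked_def)
    thus ?thesis using update_after_attack[OF real] real by (auto simp: DoS_int_def)
  next
    case False
    show ?thesis unfolding update_after_transmission[OF real False] real by (rule Inf_greatest) auto
  qed
qed (use update_after_infinity in auto)

lemma update_nonneg: "0 \<le> tk k"
  by (induction k) (auto simp: update_0 intro: order_trans update_le_Suc)

lemma update_mono: "i \<le> j \<Longrightarrow> tk i \<le> tk j"
  using incseq_SucI[of tk] update_le_Suc update_nonneg by (auto simp: incseq_def)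

lemma last_update_before:
  assumes "0 \<le> t"
  obtains k r where "tk k = ereal r" "r \<le> t" "ereal t < tk (Suc k)"
proof -
  define K where "K = {j. tk j \<le> ereal t}"
  have "finite K" using finite_updates_before by (simp add: K_def)
  moreover have "0 \<in> K" using assms update_0 by (simp add: K_def zero_ereal_def)
  ultimately have "Max K \<in> K" "Suc (Max K) \<notin> K" by (auto intro: Max_in dest: Max_ge)
  moreover from this(1) obtain r where "tk (Max K) = ereal r"
    using update_nonneg[of "Max K"] by (cases "tk (Max K)") (auto simp: K_def)
  ultimately show ?thesis using that by (auto simp: K_def not_le)
qed

lemma held_eq_last_sample:
  assumes tr: "tk k = ereal r" "r \<le> t" "ereal t < tk (Suc k)"
  shows "held x h dur tk t = last_sample k"
proof -
  have "kset h dur tk t = transmitted_upto k"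
  proof (intro set_eqI iffI)
    fix j assume "j \<in> kset h dur tk t"
    then obtain rj where rj: "tk j = ereal rj" "rj \<le> t" "rj \<notin> attacked"
      by (auto simp: kset_def Theta_def attacked_def)
    have "j \<le> k"
    proof (rule ccontr)
      assume "\<not> j \<le> k"
      hence "tk (Suc k) \<le> tk j" by (intro update_mono) simp
      moreover have "ereal rj \<le> ereal t" using rj by simp
      ultimately show False using rj tr by (metis leD order_trans)
    qed
    thus "j \<in> transmitted_upto k" using rj by (auto simp: transmitted_upto_def)
  next
    fix j assume "j \<in> transmitted_upto k"
    then obtain rj where rj: "j \<le> k" "tk j = ereal rj" "rj \<notin> attacked"
      by (auto simp: transmitted_upto_def)
    have "rj \<le> t" using update_mono[OF rj(1)] rj tr by simp
    moreover have "0 \<le> rj" using update_nonneg[of j] rj by simp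
    ultimately show "j \<in> kset h dur tk t" using rj by (auto simp: kset_def Theta_def attacked_def)
  qed
  thus ?thesis unfolding held_def kidx_def last_sample_def by simp
qed

lemma V_comp_x_has_derivative:
  assumes tr: "tk k = ereal r" "r < t" "ereal t < tk (Suc k)"
  shows "((\<lambda>s. V (x s)) has_real_derivative DV (x t) (f (x t) (kfb (last_sample k)))) (at t)"
proof -
  have "tk j \<noteq> ereal t" for j
    using update_mono[of j k] update_mono[of "Suc k" j] tr by (cases "j \<le> k") auto
  moreover have "0 < t" using update_nonneg[of k] tr by simp
  ultimately have "(x has_vector_derivative f (x t) (kfb (held x h dur tk t))) (at t)"
    by (intro x_has_vector_derivative) auto
  thus ?thesis
    using held_eq_last_sample[of k r t] tr by (simp add: has_real_derivative_compose_curve V_has_derivative)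
qed

lemma last_sample_transmitted: "tk k = ereal r \<Longrightarrow> r \<notin> attacked \<Longrightarrow> last_sample k = x r"
  unfolding last_sample_def transmitted_upto_def
  by (subst Max_eqI) auto

lemma last_sample_Suc_attacked:
  assumes "tk (Suc k) = ereal r" "r \<in> attacked"
  shows "last_sample (Suc k) = last_sample k"
proof -
  have "transmitted_upto (Suc k) = transmitted_upto k"
    using assms by (auto simp: transmitted_upto_def le_Suc_eq)
  thus ?thesis by (simp add: last_sample_def)
qed

lemma triggering_condition:
  assumes "tk k = ereal r" "r \<notin> attacked" "r < t" "ereal t < tk (Suc k)"
  shows "\<gamma>2 (4 * norm (x r - x t)) \<le> lam * (1 - c) * V (x t)"
proof (rule ccontr)
  assume "\<not> ?thesis"
  hence "Inf (ereal ` {s. s > r \<and> \<not> \<gamma>2 (4 * norm (x r - x s)) \<le> lam * (1 - c) * V (x s)})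
      \<le> ereal t"
    using assms(3) by (intro Inf_lower) auto
  thus False using update_after_transmission[OF assms(1,2)] assms(4) by simp
qed

lemma triggering_condition_at_next_update:
  assumes "tk k = ereal r" "r \<notin> attacked" "tk (Suc k) = ereal r'" "r < r'"
  shows "\<gamma>2 (4 * norm (x r - x r')) \<le> lam * (1 - c) * V (x r')"
proof -
  define \<phi> where "\<phi> s = \<gamma>2 (4 * norm (x r - x s)) - lam * (1 - c) * V (x s)" for s
  have r0: "0 \<le> r" using update_nonneg[of k] assms by simp
  have "continuous_on {r..r'} x" by (rule continuous_on_subset[OF x_continuous]) (use r0 in auto)
  hence inner: "continuous_on {r..r'} (\<lambda>s. 4 * norm (x r - x s))" by (intro continuous_intros)
  have "continuous_on {0..} \<gamma>2" using gamma_classK by (simp add: classK_inf_def)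
  hence "continuous_on {r..r'} (\<lambda>s. \<gamma>2 (4 * norm (x r - x s)))"
    by (rule continuous_on_compose2[OF _ inner]) auto
  hence "continuous_on (closure {r<..<r'}) \<phi>"
    unfolding \<phi>_def closure_greaterThanLessThan[OF assms(4)]
    by (intro continuous_intros V_comp_x_continuous r0)
  hence "\<phi> r' \<le> 0"
  proof (rule continuous_le_on_closure)
    show "r' \<in> closure {r<..<r'}" using assms(4) by (simp add: closure_greaterThanLessThan)
    show "\<phi> s \<le> 0" if "s \<in> {r<..<r'}" for s
      using triggering_condition[OF assms(1,2), of s] that assms(3) by (simp add: \<phi>_def)
  qed
  thus ?thesis by (simp add: \<phi>_def)
qed

lemma envelope_pos: "0 < envelope t"
  by (simp add: envelope_def)

lemma envelope_0: "envelope 0 = 1"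
  by (simp add: envelope_def measure_Xi_0)

lemma omega2_pos: "0 < \<omega>2"
  using lam_pos c_less_1 mu_pos by (simp add: add_pos_pos)

lemma omega_sum_pos: "0 < \<omega>1 + \<omega>2"
  using omega2_pos lam_pos c_pos by (simp add: add_pos_pos)

lemma envelope_decay:
  assumes "s \<le> t"
  shows "exp (- \<omega>1 * (t - s)) * envelope s \<le> envelope t"
proof -
  have "exp (- \<omega>1 * (t - s)) * envelope s
      = exp (- \<omega>1 * t + (\<omega>1 + \<omega>2) * measure lborel (Xi h dur s))"
    by (simp add: envelope_def exp_add[symmetric] algebra_simps)
  also have "\<dots> \<le> envelope t"
    unfolding envelope_def using measure_Xi_mono[OF assms] omega_sum_pos by simp
  finally show ?thesis .
qed

lemma envelope_growth_attacked:
  assumes "0 \<le> s" "s \<le> t" "{s<..<t} \<subseteq> attacked"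
  shows "exp (\<omega>2 * (t - s)) * envelope s \<le> envelope t"
proof -
  have "exp (\<omega>2 * (t - s)) * envelope s
      = exp (- \<omega>1 * t + (\<omega>1 + \<omega>2) * (measure lborel (Xi h dur s) + (t - s)))"
    by (simp add: envelope_def exp_add[symmetric] algebra_simps)
  also have "\<dots> \<le> envelope t"
    unfolding envelope_def using measure_Xi_add_attacked[of s t h dur] assms omega_sum_pos
    by (simp add: attacked_def)
  finally show ?thesis .
qed

lemma envelope_le:
  assumes "\<tau> > 0" "measure lborel (Xi h dur t) \<le> \<kappa> + t / \<tau>"
  shows "envelope t \<le> exp (\<kappa> * (\<omega>1 + \<omega>2)) * exp (- (\<omega>1 - (\<omega>1 + \<omega>2) / \<tau>) * t)"
proof -
  have exponent: "- \<omega>1 * t + (\<omega>1 + \<omega>2) * (\<kappa> + t / \<tau>)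
      = \<kappa> * (\<omega>1 + \<omega>2) + - (\<omega>1 - (\<omega>1 + \<omega>2) / \<tau>) * t"
    using assms(1) by (simp add: field_simps)
  have "envelope t \<le> exp (- \<omega>1 * t + (\<omega>1 + \<omega>2) * (\<kappa> + t / \<tau>))"
    unfolding envelope_def using mult_left_mono[OF assms(2) less_imp_le[OF omega_sum_pos]] by simp
  thus ?thesis unfolding exponent by (simp add: exp_add)
qed

lemma V_bound_after_transmission:
  assumes tr: "tk k = ereal r" "r \<notin> attacked" and inv: "sample_invariant k r"
    and t: "r \<le> t" "ereal t \<le> tk (Suc k)"
  shows "V (x t) \<le> envelope t * V (x 0)"
proof -
  have r0: "0 \<le> r" using update_nonneg[of k] tr by simp
  have before_next: "ereal s < tk (Suc k)" if "s < t" for s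
    by (rule less_le_trans[OF _ t(2)]) (use that in simp)
  have slope: "DV (x s) (f (x s) (kfb (last_sample k))) \<le> - \<omega>1 * V (x s)" if "r < s" "s < t" for s
  proof -
    have "\<gamma>2 (norm (last_sample k - x s)) \<le> \<gamma>2 (4 * norm (x r - x s))"
      using last_sample_transmitted[OF tr] by (intro gamma_mono) auto
    also have "\<dots> \<le> lam * (1 - c) * V (x s)"
      using triggering_condition[OF tr that(1) before_next[OF that(2)]] .
    finally show ?thesis using dissipation[of "x s" "last_sample k"] by (simp add: algebra_simps)
  qed
  have "V (x t) \<le> V (x r) * exp (- \<omega>1 * (t - r))"
    by (rule le_exp_bound_by_comparison[where \<phi> = "\<lambda>s. V (x s)" and a = "- \<omega>1",
          OF t(1) V_comp_x_continuous[OF r0]])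
      (use V_comp_x_has_derivative[OF tr(1)] before_next slope in auto)
  also have "\<dots> \<le> envelope r * V (x 0) * exp (- \<omega>1 * (t - r))"
    using inv by (intro mult_right_mono) (auto simp: sample_invariant_def)
  also have "\<dots> = (exp (- \<omega>1 * (t - r)) * envelope r) * V (x 0)"
    by (simp add: algebra_simps)
  also have "\<dots> \<le> envelope t * V (x 0)"
    using envelope_decay[OF t(1)] V_nonneg by (rule mult_right_mono)
  finally show ?thesis .
qed

lemma V_bound_under_attack:
  assumes tr: "tk k = ereal r" "r \<in> attacked" and inv: "sample_invariant k r"
    and t: "r \<le> t" "ereal t \<le> tk (Suc k)"
  shows "V (x t) \<le> envelope t * V (x 0)"
proof -
  define P where "P = envelope r * V (x 0)"
  have r0: "0 \<le> r" using update_nonneg[of k] tr by simp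
  obtain n where n: "r \<in> DoS_int h dur n" using tr(2) by (auto simp: attacked_def)
  have next_update: "tk (Suc k) = ereal (h n + dur n)" by (rule update_after_attack[OF tr(1) n])
  have before_next: "ereal s < tk (Suc k)" if "s < t" for s
    by (rule less_le_trans[OF _ t(2)]) (use that in simp)
  have sample: "\<gamma>2 (2 * norm (last_sample k)) \<le> (\<omega>2 - \<mu>) * P"
    using inv tr(2) by (simp add: sample_invariant_def P_def mult.assoc)
  have rate_nonneg: "0 \<le> \<omega>2 - \<mu>" using lam_pos c_less_1 mu_pos by simp
  have slope: "DV (x s) (f (x s) (kfb (last_sample k))) \<le> \<omega>2 * V (x s)" if "P < V (x s)" for s
  proof -
    have "\<gamma>2 (norm (last_sample k - x s)) \<le> \<gamma>2 (2 * norm (last_sample k)) + \<gamma>2 (2 * norm (x s))"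
      by (rule classK_inf_le_add[OF gamma_classK]) (auto simp: norm_triangle_ineq4)
    also have "\<dots> \<le> (\<omega>2 - \<mu>) * V (x s) + \<mu> * V (x s)"
      using sample mult_left_mono[OF less_imp_le[OF that] rate_nonneg] gamma_double_le_V[of "x s"]
      by linarith
    also have "\<dots> = \<omega>2 * V (x s)" by (simp add: algebra_simps)
    finally show ?thesis
      using dissipation[of "x s" "last_sample k"] mult_nonneg_nonneg[OF less_imp_le[OF lam_pos] V_nonneg[of "x s"]]
      by linarith
  qed
  have P_nonneg: "0 \<le> P" using envelope_pos[of r] V_nonneg[of "x 0"] by (simp add: P_def)
  have P_le: "P \<le> P * exp (\<omega>2 * (s - r))" if "r < s" for s
  proof -
    have "1 \<le> exp (\<omega>2 * (s - r))" using that omega2_pos by simp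
    thus ?thesis using mult_left_mono[OF _ P_nonneg] by fastforce
  qed
  have "V (x t) \<le> P * exp (\<omega>2 * (t - r))"
  proof (rule le_exp_bound_by_comparison[where \<phi> = "\<lambda>s. V (x s)" and a = "\<omega>2",
        OF t(1) V_comp_x_continuous[OF r0]])
    show "((\<lambda>s. V (x s)) has_real_derivative DV (x s) (f (x s) (kfb (last_sample k)))) (at s)"
      if "r < s" "s < t" for s
      using V_comp_x_has_derivative[OF tr(1) that(1) before_next[OF that(2)]] .
    show "V (x r) \<le> P" using inv by (simp add: sample_invariant_def P_def)
    show "DV (x s) (f (x s) (kfb (last_sample k))) \<le> \<omega>2 * V (x s)"
      if "r < s" "s < t" "P * exp (\<omega>2 * (s - r)) < V (x s)" for s
      by (rule slope) (use P_le[OF that(1)] that(3) in linarith)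
  qed
  also have "\<dots> = (exp (\<omega>2 * (t - r)) * envelope r) * V (x 0)"
    by (simp add: P_def algebra_simps)
  also have "\<dots> \<le> envelope t * V (x 0)"
  proof (intro mult_right_mono V_nonneg envelope_growth_attacked[OF r0 t(1)])
    have "t \<le> h n + dur n" using t(2) next_update by simp
    hence "{r<..<t} \<subseteq> DoS_int h dur n" using n by (auto simp: DoS_int_def)
    thus "{r<..<t} \<subseteq> attacked" by (auto simp: attacked_def)
  qed
  finally show ?thesis .
qed

lemma V_bound_between_updates:
  assumes "tk k = ereal r" "sample_invariant k r" "r \<le> t" "ereal t \<le> tk (Suc k)"
  shows "V (x t) \<le> envelope t * V (x 0)"
  using V_bound_after_transmission[OF _ _ assms(2-4)] V_bound_under_attack[OF _ _ assms(2-4)]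
    assms(1) by blast

lemma sample_invariant_Suc:
  assumes tr: "tk k = ereal r" and inv: "sample_invariant k r" and tr': "tk (Suc k) = ereal r'"
  shows "sample_invariant (Suc k) r'"
proof -
  have rr': "r \<le> r'" using update_mono[of k "Suc k"] tr tr' by simp
  have V': "V (x r') \<le> envelope r' * V (x 0)"
    by (rule V_bound_between_updates[OF tr inv rr']) (simp add: tr')
  have "\<gamma>2 (2 * norm (last_sample (Suc k))) \<le> (\<omega>2 - \<mu>) * envelope r' * V (x 0)"
    if attacked': "r' \<in> attacked"
  proof (cases "r \<in> attacked")
    case False
    have "r < r'" using rr' False attacked' by (cases "r = r'") auto
    have "norm (x r) \<le> norm (x r - x r') + norm (x r')"
      using norm_triangle_ineq[of "x r - x r'" "x r'"] by simp
    hence "2 * norm (x r) \<le> 2 * norm (x r - x r') + 2 * norm (x r')" by simp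
    hence "\<gamma>2 (2 * norm (x r)) \<le> \<gamma>2 (2 * (2 * norm (x r - x r'))) + \<gamma>2 (2 * (2 * norm (x r')))"
      by (intro classK_inf_le_add[OF gamma_classK]) auto
    also have "\<dots> \<le> lam * (1 - c) * V (x r') + \<mu> * V (x r')"
      using triggering_condition_at_next_update[OF tr False tr' \<open>r < r'\<close>] gain_le_V[of "x r'"]
      by simp
    also have "\<dots> = (\<omega>2 - \<mu>) * V (x r')" by (simp add: algebra_simps)
    also have "\<dots> \<le> (\<omega>2 - \<mu>) * (envelope r' * V (x 0))"
      using V' lam_pos c_less_1 mu_pos by (intro mult_left_mono) auto
    finally show ?thesis
      using last_sample_Suc_attacked[OF tr' attacked'] last_sample_transmitted[OF tr False]
      by (simp add: mult.assoc)
  next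
    case True
    obtain n where n: "r \<in> DoS_int h dur n" using True by (auto simp: attacked_def)
    have "r' = h n + dur n" using update_after_attack[OF tr n] tr' by simp
    hence "{r<..<r'} \<subseteq> DoS_int h dur n" using n by (auto simp: DoS_int_def)
    hence "{r<..<r'} \<subseteq> attacked" by (auto simp: attacked_def)
    hence "exp (\<omega>2 * (r' - r)) * envelope r \<le> envelope r'"
      using update_nonneg[of k] tr rr' by (intro envelope_growth_attacked) auto
    moreover have "envelope r \<le> exp (\<omega>2 * (r' - r)) * envelope r"
      using rr' envelope_pos[of r] lam_pos c_less_1 mu_pos by (simp add: mult_le_cancel_right1)
    ultimately have "(\<omega>2 - \<mu>) * envelope r * V (x 0) \<le> (\<omega>2 - \<mu>) * envelope r' * V (x 0)"
      using lam_pos c_less_1 mu_pos V_nonneg by (intro mult_right_mono mult_left_mono) auto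
    thus ?thesis
      using inv True last_sample_Suc_attacked[OF tr' attacked'] by (simp add: sample_invariant_def)
  qed
  thus ?thesis using V' by (simp add: sample_invariant_def)
qed

lemma sample_invariant_holds: "tk k = ereal r \<Longrightarrow> sample_invariant k r"
proof (induction k arbitrary: r)
  case 0
  hence "r = 0" using update_0 by (simp add: zero_ereal_def)
  moreover have "last_sample 0 = 0" if "0 \<in> attacked"
    using that update_0 by (simp add: last_sample_def transmitted_upto_def zero_ereal_def)
  ultimately show ?case
    using gamma_classK envelope_0 V_nonneg lam_pos c_less_1 mu_pos
    by (auto simp: sample_invariant_def classK_inf_def)
next
  case (Suc k)
  obtain rk where rk: "tk k = ereal rk"
    using update_mono[of k "Suc k"] update_nonneg[of k] Suc.prems by (cases "tk k") auto
  show ?case by (rule sample_invariant_Suc[OF rk Suc.IH[OF rk] Suc.prems])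
qed

lemma V_le_envelope:
  assumes "0 \<le> t"
  shows "V (x t) \<le> envelope t * V (x 0)"
proof -
  obtain k r where "tk k = ereal r" "r \<le> t" "ereal t < tk (Suc k)"
    using last_update_before[OF assms] .
  thus ?thesis using V_bound_between_updates sample_invariant_holds by (meson less_imp_le)
qed

lemma V_le_exponential:
  assumes "\<tau> > 0" "measure lborel (Xi h dur t) \<le> \<kappa> + t / \<tau>" "0 \<le> t"
  shows "V (x t) \<le> exp (\<kappa> * (\<omega>1 + \<omega>2)) * exp (- (\<omega>1 - (\<omega>1 + \<omega>2) / \<tau>) * t) * V (x 0)"
  using V_le_envelope[OF assms(3)] envelope_le[OF assms(1,2)] V_nonneg[of "x 0"]
  by (meson mult_right_mono order_trans)

end

theorem theorem1:
  fixes f :: "'a::euclidean_space \<Rightarrow> 'b \<Rightarrow> 'a" and kfb :: "'a \<Rightarrow> 'b"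
    and V :: "'a \<Rightarrow> real" and DV :: "'a \<Rightarrow> 'a \<Rightarrow> real"
    and \<alpha>1 \<alpha>2 \<gamma>2 :: "real \<Rightarrow> real"
    and lam c \<kappa> \<tau> \<mu> :: real
    and h dur :: "nat \<Rightarrow> real" and tk :: "nat \<Rightarrow> ereal" and x :: "real \<Rightarrow> 'a"
  assumes K1: "classK_inf \<alpha>1" and K2: "classK_inf \<alpha>2" and Kg: "classK_inf \<gamma>2"
    and lam_pos: "lam > 0"
    and V_bounds: "\<forall>z. \<alpha>1 (norm z) \<le> V z \<and> V z \<le> \<alpha>2 (norm z)"
    and V_deriv: "\<forall>z. (V has_derivative DV z) (at z)"
    and ISS: "\<forall>z e. DV z (f z (kfb (z + e))) \<le> - lam * V z + \<gamma>2 (norm e)"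
    and h0: "h 0 \<ge> 0" and dur_pos: "\<forall>n. dur n > 0"
    and c_range: "0 < c" "c < 1"
    and A1: "filterlim h at_top sequentially" "\<kappa> \<ge> 0" "\<tau> > 0"
      "\<forall>t\<ge>0. measure lborel (Xi h dur t) \<le> \<kappa> + t / \<tau>"
    and A2: "\<mu> > 0" "\<forall>r\<ge>0. \<gamma>2 (4 * r) \<le> \<mu> * \<alpha>1 r"
    and tau_cond: "\<tau> > (c * lam) / (c * lam + (lam * (1 - c) + 2 * \<mu>))"
    and sol: "is_solution f kfb V \<gamma>2 lam c h dur tk x"
  shows "\<forall>t\<ge>0. norm (x t) \<le> inv_into {0..} \<alpha>1
           (exp (\<kappa> * (c * lam + (lam * (1 - c) + 2 * \<mu>)))
            * exp (- (c * lam - (c * lam + (lam * (1 - c) + 2 * \<mu>)) / \<tau>) * t)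
            * \<alpha>2 (norm (x 0)))"
proof -
  have gain: "\<gamma>2 (4 * norm z) \<le> \<mu> * V z" for z
  proof -
    have "\<gamma>2 (4 * norm z) \<le> \<mu> * \<alpha>1 (norm z)" using A2(2) by simp
    also have "\<dots> \<le> \<mu> * V z" using V_bounds A2(1) by (intro mult_left_mono) auto
    finally show ?thesis .
  qed
  interpret dos_event_triggered_loop f kfb V DV \<gamma>2 lam c \<mu> h dur tk x
    by unfold_locales (use Kg lam_pos c_range A2(1) V_deriv ISS gain sol in simp_all)
  \<comment> \<open>The condition on \<open>\<tau>\<close> only makes the exponent negative; the estimate holds for all \<open>\<tau> > 0\<close>.\<close>
  show ?thesis
  proof (intro allI impI)
    fix t :: real
    assume t: "0 \<le> t"
    have "\<alpha>1 (norm (x t)) \<le> V (x t)" using V_bounds by simp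
    also have "\<dots> \<le> exp (\<kappa> * (\<omega>1 + \<omega>2)) * exp (- (\<omega>1 - (\<omega>1 + \<omega>2) / \<tau>) * t) * V (x 0)"
      using A1(3) A1(4)[rule_format, OF t] t by (rule V_le_exponential)
    also have "\<dots> \<le> exp (\<kappa> * (\<omega>1 + \<omega>2)) * exp (- (\<omega>1 - (\<omega>1 + \<omega>2) / \<tau>) * t)
        * \<alpha>2 (norm (x 0))"
      using V_bounds by (intro mult_left_mono) auto
    finally have bound: "\<alpha>1 (norm (x t)) \<le> \<dots>" .
    show "norm (x t) \<le> inv_into {0..} \<alpha>1 (exp (\<kappa> * (\<omega>1 + \<omega>2))
        * exp (- (\<omega>1 - (\<omega>1 + \<omega>2) / \<tau>) * t) * \<alpha>2 (norm (x 0)))"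
      by (rule le_inv_into_classK_inf[OF K1 _ norm_ge_zero bound])
        (use bound classK_inf_nonneg[OF K1 norm_ge_zero, of "x t"] in linarith)
  qed
qed

end
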